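(* Let $u:\mathbb{R}^d\to\mathbb{R}$ be a bounded Borel function and let $\lambda$ be a Radon measure on $\mathbb{R}^d$. Assume that $\mathcal{N}_u$ is $|\lambda|$-negligible. Then for every $\rho\in\mathcal{K}$ with support contained in $B_{1/2}$, setting $u_\ell=u*\rho_\ell$ and $\lambda_\ell=\lambda*\rho_\ell$, one has $u_\ell\lambda_\ell\rightharpoonup u^{\rho*\rho}\lambda$ weakly as measures as $\ell\to0$ (i.e. $\int\phi\,u_\ell\lambda_\ell\,dx\to\int\phi\,u^{\rho*\rho}\,d\lambda$ for every $\phi\in C_c(\mathbb{R}^d)$), where $u^{\rho*\rho}(x)=\int(\rho*\rho)(z)v(z)\,dz$ with $v$ the blow up of $u$ at $x$ (defined for $x\notin\mathcal{N}_u$).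
   Context: $\mathcal{K}$ is the set of $\rho\in C^\infty_c(B_1)$ that are even with $\int\rho=1$; $\rho_\ell(x)=\ell^{-d}\rho(x/\ell)$. Blow-up: $u$ admits a blow up at $x_0$ if there is $v\in L^1(B_1)$ with $\lim_{\ell\to0}\int_{B_1}|u(x_0+\ell z)-v(z)|\,dz=0$ (full limit $\ell\to0$); $\mathcal{N}_u$ is the set of points where $u$ admits no blow up. *)

theory Defs
  imports "HOL-Analysis.Analysis"
begin

definition pderiv_dir :: "'a::euclidean_space \<Rightarrow> ('a \<Rightarrow> real) \<Rightarrow> 'a \<Rightarrow> real" where
  "pderiv_dir b f = (\<lambda>x. frechet_derivative f (at x) b)"

definition smooth_fun :: "('a::euclidean_space \<Rightarrow> real) \<Rightarrow> bool" where
  "smooth_fun f \<longleftrightarrow> (\<forall>bs. set bs \<subseteq> Basis \<longrightarrow>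
      (\<forall>x. foldr pderiv_dir bs f differentiable (at x)))"

definition supp :: "('a::real_normed_vector \<Rightarrow> real) \<Rightarrow> 'a set" where
  "supp f = closure {x. f x \<noteq> 0}"

definition mollifiers :: "('a::euclidean_space \<Rightarrow> real) set" where
  "mollifiers = {\<rho>. smooth_fun \<rho> \<and> compact (supp \<rho>) \<and> supp \<rho> \<subseteq> ball 0 1
       \<and> (\<forall>x. \<rho> (- x) = \<rho> x) \<and> integral\<^sup>L lborel \<rho> = 1}"

definition rescale :: "('a::euclidean_space \<Rightarrow> real) \<Rightarrow> real \<Rightarrow> 'a \<Rightarrow> real" where
  "rescale \<rho> l x = l powr (- real DIM('a)) * \<rho> ((1 / l) *\<^sub>R x)"

definition conv :: "('a::euclidean_space \<Rightarrow> real) \<Rightarrow> ('a \<Rightarrow> real) \<Rightarrow> 'a \<Rightarrow> real" where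
  "conv f g x = (\<integral>y. f (x - y) * g y \<partial>lborel)"

text \<open>Convolution of the signed measure sigma*mu (polar form) with a function g:
  (lambda * g)(x) = integral g(x - y) d lambda(y).\<close>
definition conv_meas :: "'a::euclidean_space measure \<Rightarrow> ('a \<Rightarrow> real) \<Rightarrow> ('a \<Rightarrow> real) \<Rightarrow> 'a \<Rightarrow> real" where
  "conv_meas \<mu> \<sigma> g x = (\<integral>y. g (x - y) * \<sigma> y \<partial>\<mu>)"

definition is_blowup :: "('a::euclidean_space \<Rightarrow> real) \<Rightarrow> 'a \<Rightarrow> ('a \<Rightarrow> real) \<Rightarrow> bool" where
  "is_blowup u x0 v \<longleftrightarrow> set_integrable lborel (ball 0 1) v \<and>
     ((\<lambda>l. \<integral>z\<in>ball 0 1. \<bar>u (x0 + l *\<^sub>R z) - v z\<bar> \<partial>lborel) \<longlongrightarrow> 0) (at_right 0)"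

definition no_blowup_set :: "('a::euclidean_space \<Rightarrow> real) \<Rightarrow> 'a set" where
  "no_blowup_set u = {x. \<not> (\<exists>v. is_blowup u x v)}"

definition blowup_avg :: "('a::euclidean_space \<Rightarrow> real) \<Rightarrow> ('a \<Rightarrow> real) \<Rightarrow> 'a \<Rightarrow> real" where
  "blowup_avg u \<eta> x = (if \<exists>v. is_blowup u x v
      then (\<integral>z. \<eta> z * (SOME v. is_blowup u x v) z \<partial>lborel) else 0)"

definition radon_measure :: "'a::euclidean_space measure \<Rightarrow> bool" where
  "radon_measure \<mu> \<longleftrightarrow> sets \<mu> = sets borel \<and> (\<forall>K. compact K \<longrightarrow> emeasure \<mu> K < \<infinity>)"

end

theory Submission
  imports Defs
begin

text \<open>
  Fubini moves the mollification from \<open>\<lambda>\<close> onto the test function: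
  \<open>\<integral> \<phi> u\<^sub>l \<lambda>\<^sub>l = \<integral> F\<^sub>l d\<lambda>\<close> with \<open>F\<^sub>l y = \<integral> \<phi> x u\<^sub>l x \<rho>\<^sub>l (x - y) dx\<close>.
  Substituting \<open>x = y + l a\<close> turns \<open>F\<^sub>l y\<close> into
  \<open>\<integral> \<phi> (y + l a) \<rho> a (\<rho> * u (y + l \<cdot>)) a da\<close>. As \<open>\<rho>\<close> lives in \<open>B\<^sub>1\<^sub>/\<^sub>2\<close>, only the
  values of \<open>u (y + l \<cdot>)\<close> on \<open>B\<^sub>1\<close> enter, so at a point with blow up \<open>v\<close> the inner
  convolutions converge to \<open>\<rho> * v\<close>, and \<open>F\<^sub>l y \<rightarrow> \<phi> y \<integral> \<rho> (\<rho> * v) = \<phi> y \<integral> (\<rho> * \<rho>) v\<close>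
  because \<open>\<rho>\<close> is even. The \<open>F\<^sub>l\<close> are uniformly bounded and supported in a fixed compact
  set, and \<open>\<N>\<^sub>u\<close> is \<open>|\<lambda>|\<close>-null, so dominated convergence with respect to \<open>|\<lambda>|\<close> concludes.
\<close>

lemma integral_dominated_convergence_at_right:
  fixes s :: "real \<Rightarrow> 'a \<Rightarrow> 'b::{banach, second_countable_topology}" and w :: "'a \<Rightarrow> real"
  assumes "f \<in> borel_measurable M" "\<And>t. s t \<in> borel_measurable M" "integrable M w"
    and "AE x in M. ((\<lambda>t. s t x) \<longlongrightarrow> f x) (at_right 0)"
    and "\<forall>\<^sub>F t in at_right 0. AE x in M. norm (s t x) \<le> w x"
  shows "((\<lambda>t. integral\<^sup>L M (s t)) \<longlongrightarrow> integral\<^sup>L M f) (at_right 0)"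
proof -
  have "((\<lambda>t. integral\<^sup>L M (s (inverse t))) \<longlongrightarrow> integral\<^sup>L M f) at_top"
  proof (rule integral_dominated_convergence_at_top[where w=w])
    show "AE x in M. ((\<lambda>t. s (inverse t) x) \<longlongrightarrow> f x) at_top"
      using assms(4) by eventually_elim (simp add: filterlim_at_right_to_top)
    show "\<forall>\<^sub>F t in at_top. AE x in M. norm (s (inverse t) x) \<le> w x"
      using assms(5) by (simp add: eventually_at_right_to_top)
  qed (use assms in auto)
  then show ?thesis by (simp add: filterlim_at_right_to_top)
qed

lemma borel_measurable_at_right_limit:
  fixes f :: "real \<Rightarrow> 'a \<Rightarrow> real"
  assumes "\<And>t. f t \<in> borel_measurable M"
    and "\<And>x. x \<in> space M \<Longrightarrow> ((\<lambda>t. f t x) \<longlongrightarrow> g x) (at_right 0)"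
  shows "g \<in> borel_measurable M"
proof (rule borel_measurable_LIMSEQ_real[where u="\<lambda>n. f (1 / Suc n)"])
  have "filterlim (\<lambda>n. 1 / real (Suc n)) (at_right 0) sequentially"
    using LIMSEQ_Suc[OF lim_1_over_n] by (intro tendsto_imp_filterlim_at_right) auto
  then show "(\<lambda>n. f (1 / Suc n) x) \<longlonglongrightarrow> g x" if "x \<in> space M" for x
    using filterlim_compose[OF assms(2)[OF that]] by simp
qed (use assms in simp)

lemma lborel_integral_affine:
  fixes g :: "'a::euclidean_space \<Rightarrow> real"
  assumes c: "c \<noteq> 0" and g: "g \<in> borel_measurable borel"
  shows "integral\<^sup>L lborel g = \<bar>c\<bar>^DIM('a) * (\<integral>x. g (t + c *\<^sub>R x) \<partial>lborel)"
proof -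
  have "integral\<^sup>L lborel g
      = integral\<^sup>L (density (distr lborel borel (\<lambda>x. t + c *\<^sub>R x)) (\<lambda>_. \<bar>c\<bar>^DIM('a))) g"
    by (subst lborel_affine[OF c, of t]) (rule refl)
  also have "\<dots> = integral\<^sup>L (distr lborel borel (\<lambda>x. t + c *\<^sub>R x)) (\<lambda>x. \<bar>c\<bar>^DIM('a) *\<^sub>R g x)"
    using g by (subst integral_density[symmetric]) (auto simp: ennreal_power)
  also have "\<dots> = (\<integral>x. \<bar>c\<bar>^DIM('a) *\<^sub>R g (t + c *\<^sub>R x) \<partial>lborel)"
    using g by (subst integral_distr) auto
  finally show ?thesis by simp
qed

lemma lborel_integral_reflect_shift:
  fixes g :: "'a::euclidean_space \<Rightarrow> real"
  assumes "g \<in> borel_measurable borel"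
  shows "(\<integral>z. g (a - z) \<partial>lborel) = integral\<^sup>L lborel g"
  using lborel_integral_affine[OF _ assms, of "-1" a] by simp

lemma abs_mult_le_mult:
  fixes a b :: real
  shows "\<bar>a\<bar> \<le> A \<Longrightarrow> \<bar>b\<bar> \<le> B \<Longrightarrow> \<bar>a * b\<bar> \<le> A * B"
  by (simp add: abs_mult mult_mono')

lemma abs_integral_le_integral:
  fixes f g :: "'a \<Rightarrow> real"
  assumes "integrable M g" "\<And>x. x \<in> space M \<Longrightarrow> \<bar>f x\<bar> \<le> g x"
  shows "\<bar>integral\<^sup>L M f\<bar> \<le> integral\<^sup>L M g"
proof -
  have "\<bar>integral\<^sup>L M f\<bar> \<le> (\<integral>x. \<bar>f x\<bar> \<partial>M)"
    using integral_norm_bound[of M f] by simp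
  also have "\<dots> \<le> integral\<^sup>L M g"
    using assms by (intro integral_mono') (auto intro: order_trans[OF abs_ge_zero])
  finally show ?thesis .
qed

lemma integrable_mult_bounded:
  fixes f g :: "'a \<Rightarrow> real"
  assumes "integrable M f" "g \<in> borel_measurable M" "\<And>x. x \<in> space M \<Longrightarrow> \<bar>g x\<bar> \<le> B"
  shows "integrable M (\<lambda>x. f x * g x)"
proof (rule Bochner_Integration.integrable_bound[where f="\<lambda>x. B * f x"])
  show "AE x in M. norm (f x * g x) \<le> norm (B * f x)"
  proof (rule AE_I2)
    fix x assume "x \<in> space M"
    then have "\<bar>g x\<bar> \<le> \<bar>B\<bar>"
      using assms(3) by (meson abs_ge_self order_trans)
    then show "norm (f x * g x) \<le> norm (B * f x)"
      by (simp add: abs_mult) (metis abs_ge_zero mult.commute mult_right_mono)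
  qed
qed (use assms in \<open>auto intro: borel_measurable_integrable\<close>)

lemma (in pair_sigma_finite) integrable_mult_product:
  fixes f :: "'a \<Rightarrow> real" and g :: "'b \<Rightarrow> real"
  assumes f: "integrable M1 f" and g: "integrable M2 g"
  shows "integrable (M1 \<Otimes>\<^sub>M M2) (\<lambda>(x, y). f x * g y)"
proof (rule Fubini_integrable)
  have [measurable]: "f \<in> borel_measurable M1" "g \<in> borel_measurable M2"
    using f g by auto
  show "(\<lambda>(x, y). f x * g y) \<in> borel_measurable (M1 \<Otimes>\<^sub>M M2)"
    by measurable
  show "integrable M1 (\<lambda>x. \<integral>y. norm (case (x, y) of (x, y) \<Rightarrow> f x * g y) \<partial>M2)"
    using f by (simp add: abs_mult)
  show "AE x in M1. integrable M2 (\<lambda>y. case (x, y) of (x, y) \<Rightarrow> f x * g y)"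
    using g by simp
qed

lemma abs_conv_diff_le:
  fixes k f g :: "'a::euclidean_space \<Rightarrow> real"
  assumes [measurable]: "k \<in> borel_measurable borel" and k: "\<And>x. \<bar>k x\<bar> \<le> R"
    and f: "integrable lborel f" and g: "integrable lborel g"
  shows "\<bar>conv k f a - conv k g a\<bar> \<le> R * (\<integral>z. \<bar>f z - g z\<bar> \<partial>lborel)"
proof -
  have "integrable lborel (\<lambda>z. h z * k (a - z))" if "integrable lborel h" for h
    using that k by (intro integrable_mult_bounded) auto
  then have "conv k f a - conv k g a = (\<integral>z. k (a - z) * (f z - g z) \<partial>lborel)"
    using f g unfolding conv_def
    by (subst Bochner_Integration.integral_diff[symmetric]) (auto simp: algebra_simps)
  also have "\<bar>\<dots>\<bar> \<le> (\<integral>z. R * \<bar>f z - g z\<bar> \<partial>lborel)"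
    using f g k by (intro abs_integral_le_integral) (auto simp: abs_mult intro!: mult_right_mono)
  finally show ?thesis by simp
qed

lemma borel_measurable_conv [measurable]:
  assumes [measurable]: "f \<in> borel_measurable borel" "g \<in> borel_measurable borel"
  shows "conv f g \<in> borel_measurable borel"
  unfolding conv_def by measurable

lemma not_in_supp_eq_zero: "x \<notin> supp f \<Longrightarrow> f x = 0"
  unfolding supp_def by (meson closure_subset mem_Collect_eq subsetD)

lemma continuous_compact_supp_bounds:
  assumes "continuous_on UNIV f" "compact (supp f)"
  obtains B r where "\<And>x. \<bar>f x\<bar> \<le> B" "\<And>x. r < norm x \<Longrightarrow> f x = 0"
proof -
  obtain r where r: "\<And>x. x \<in> supp f \<Longrightarrow> norm x \<le> r"
    using compact_imp_bounded[OF assms(2)] by (auto simp: bounded_iff)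
  have "compact (f ` supp f)"
    using assms by (intro compact_continuous_image) (auto intro: continuous_on_subset)
  then obtain B where B: "\<forall>x\<in>supp f. \<bar>f x\<bar> \<le> B"
    by (auto dest!: compact_imp_bounded simp: bounded_iff)
  have "\<bar>f x\<bar> \<le> max B 0" for x
    using B not_in_supp_eq_zero[of x f] by (cases "x \<in> supp f") auto
  moreover have "f x = 0" if "r < norm x" for x
    using r[of x] not_in_supp_eq_zero[of x f] that by (cases "x \<in> supp f") auto
  ultimately show thesis
    by (rule that)
qed

lemma smooth_fun_continuous:
  assumes "smooth_fun f"
  shows "continuous_on UNIV f"
proof -
  have "f differentiable (at x)" for x
    using assms unfolding smooth_fun_def by (metis empty_subsetI empty_set foldr_Nil id_apply)
  then show ?thesis
    by (simp add: continuous_at_imp_continuous_on differentiable_imp_continuous_within)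
qed

lemma radon_measure_sigma_finite:
  assumes "radon_measure \<mu>"
  shows "sigma_finite_measure \<mu>"
proof
  have sets: "sets \<mu> = sets borel" and finite: "\<And>n. emeasure \<mu> (cball 0 (real n)) < \<infinity>"
    using assms by (auto simp: radon_measure_def)
  show "\<exists>A. countable A \<and> A \<subseteq> sets \<mu> \<and> \<Union> A = space \<mu> \<and> (\<forall>a\<in>A. emeasure \<mu> a \<noteq> \<infinity>)"
  proof (intro exI[of _ "range (\<lambda>n::nat. cball 0 (real n))"] conjI ballI)
    have "\<exists>n::nat. x \<in> cball 0 (real n)" for x :: 'a
      using real_arch_simple[of "norm x"] by auto
    then show "\<Union> (range (\<lambda>n::nat. cball 0 (real n))) = space \<mu>"
      using sets_eq_imp_space_eq[OF sets] by auto
  qed (use sets finite in \<open>auto simp: less_top\<close>)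
qed

text \<open>\<open>mollified_test \<rho> \<phi> u l\<close> is the function \<open>F\<^sub>l\<close> that \<open>\<lambda> = \<sigma> \<mu>\<close> is tested against.\<close>

definition mollified_test ::
    "('a::euclidean_space \<Rightarrow> real) \<Rightarrow> ('a \<Rightarrow> real) \<Rightarrow> ('a \<Rightarrow> real) \<Rightarrow> real \<Rightarrow> 'a \<Rightarrow> real" where
  "mollified_test \<rho> \<phi> u l y = (\<integral>x. \<phi> x * conv u (rescale \<rho> l) x * rescale \<rho> l (x - y) \<partial>lborel)"

locale half_ball_kernel =
  fixes \<rho> :: "'a::euclidean_space \<Rightarrow> real"
  assumes continuous: "continuous_on UNIV \<rho>"
    and supp_subset: "supp \<rho> \<subseteq> ball 0 (1/2)"
    and even: "\<And>x. \<rho> (- x) = \<rho> x"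

lemma mollifier_half_ball_kernel:
  assumes "\<rho> \<in> mollifiers" "supp \<rho> \<subseteq> ball 0 (1/2)"
  shows "half_ball_kernel \<rho>"
  using assms by unfold_locales (auto simp: mollifiers_def intro: smooth_fun_continuous)

context half_ball_kernel
begin

lemma norm_less_half: "\<rho> a \<noteq> 0 \<Longrightarrow> norm a < 1/2"
  by (meson mem_ball_0 not_in_supp_eq_zero subsetD supp_subset)

lemma borel_measurable_kernel [measurable]: "\<rho> \<in> borel_measurable borel"
  using continuous by (rule borel_measurable_continuous_onI)

lemma kernel_bounded:
  obtains R where "\<And>a. \<bar>\<rho> a\<bar> \<le> R"
proof -
  have "bounded (supp \<rho>)"
    using supp_subset bounded_ball bounded_subset by blast
  then have "compact (supp \<rho>)"
    by (simp add: compact_eq_bounded_closed supp_def)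
  then show thesis
    using continuous_compact_supp_bounds[OF continuous] that by metis
qed

lemma integrable_kernel_shift: "integrable lborel (\<lambda>z. \<rho> (a - z))"
proof -
  obtain R where R: "\<And>a. \<bar>\<rho> a\<bar> \<le> R" using kernel_bounded by blast
  show ?thesis
  proof (rule integrableI_bounded_set[where A="ball a 1" and B=R])
    show "AE z in lborel. z \<notin> ball a 1 \<longrightarrow> \<rho> (a - z) = 0"
      using norm_less_half by (intro AE_I2) (force simp: dist_norm)
  qed (use R emeasure_bounded_finite[OF bounded_ball] in auto)
qed

lemma integrable_kernel: "integrable lborel \<rho>"
  using integrable_kernel_shift[of 0] by (simp add: even)

lemma rescale_eq_zero:
  assumes "0 < l" "l/2 \<le> norm x"
  shows "rescale \<rho> l x = 0"
proof -
  have "1/2 \<le> norm ((1/l) *\<^sub>R x)"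
    using assms by (simp add: field_simps)
  then have "\<rho> ((1/l) *\<^sub>R x) = 0"
    using norm_less_half by (meson not_less)
  then show ?thesis by (simp add: rescale_def)
qed

lemma rescale_scaled: "0 < l \<Longrightarrow> rescale \<rho> l (l *\<^sub>R a) = l powr (- real DIM('a)) * \<rho> a"
  by (simp add: rescale_def)

lemma borel_measurable_rescale [measurable]: "rescale \<rho> l \<in> borel_measurable borel"
  unfolding rescale_def by measurable

lemma rescale_bounded:
  obtains R where "\<And>x. \<bar>rescale \<rho> l x\<bar> \<le> R"
proof -
  obtain R where R: "\<And>a. \<bar>\<rho> a\<bar> \<le> R" using kernel_bounded by blast
  have "\<bar>rescale \<rho> l x\<bar> \<le> l powr (- real DIM('a)) * R" for x
    using R by (simp add: rescale_def abs_mult mult_left_mono)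
  then show thesis by (rule that)
qed

lemma integrable_rescale_shift:
  assumes l: "0 < l"
  shows "integrable lborel (\<lambda>x. rescale \<rho> l (x - y))"
proof -
  obtain R where R: "\<And>x. \<bar>rescale \<rho> l x\<bar> \<le> R" using rescale_bounded by blast
  show ?thesis
  proof (rule integrableI_bounded_set[where A="ball y l" and B=R])
    show "AE x in lborel. x \<notin> ball y l \<longrightarrow> rescale \<rho> l (x - y) = 0"
      using l by (intro AE_I2 impI rescale_eq_zero) (auto simp: dist_norm norm_minus_commute)
  qed (use R emeasure_bounded_finite[OF bounded_ball] in auto)
qed

lemma integral_abs_rescale_shift:
  assumes l: "0 < l"
  shows "(\<integral>x. \<bar>rescale \<rho> l (x - y)\<bar> \<partial>lborel) = (\<integral>a. \<bar>\<rho> a\<bar> \<partial>lborel)"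
proof -
  have "(\<integral>x. \<bar>rescale \<rho> l (x - y)\<bar> \<partial>lborel)
      = l ^ DIM('a) * (\<integral>a. l powr (- real DIM('a)) * \<bar>\<rho> a\<bar> \<partial>lborel)"
    using l by (subst lborel_integral_affine[where c=l and t=y]) (auto simp: rescale_scaled abs_mult)
  also have "\<dots> = (\<integral>a. \<bar>\<rho> a\<bar> \<partial>lborel)"
    using l by (simp add: powr_minus powr_realpow)
  finally show ?thesis .
qed

lemma abs_conv_le:
  assumes [measurable]: "h \<in> borel_measurable borel" and h: "\<And>x. \<bar>h x\<bar> \<le> M"
  shows "\<bar>conv \<rho> h a\<bar> \<le> M * (\<integral>z. \<bar>\<rho> z\<bar> \<partial>lborel)"
proof -
  have "\<bar>conv \<rho> h a\<bar> \<le> (\<integral>z. \<bar>\<rho> (a - z)\<bar> * M \<partial>lborel)"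
    unfolding conv_def using h integrable_kernel_shift[of a]
    by (intro abs_integral_le_integral) (auto simp: abs_mult intro: mult_left_mono)
  also have "\<dots> = M * (\<integral>z. \<bar>\<rho> z\<bar> \<partial>lborel)"
    using lborel_integral_reflect_shift[of "\<lambda>z. \<bar>\<rho> z\<bar>" a] by simp
  finally show ?thesis .
qed

lemma conv_rescale_scaled:
  assumes [measurable]: "u \<in> borel_measurable borel" and l: "0 < l"
  shows "conv u (rescale \<rho> l) (y + l *\<^sub>R a) = conv \<rho> (\<lambda>z. u (y + l *\<^sub>R z)) a"
proof -
  have "conv u (rescale \<rho> l) (y + l *\<^sub>R a)
      = l ^ DIM('a) * (\<integral>z. u (y + l *\<^sub>R z) * rescale \<rho> l (l *\<^sub>R (a - z)) \<partial>lborel)"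
    unfolding conv_def using l
    by (subst lborel_integral_affine[where c="-l" and t="l *\<^sub>R a"]) (auto simp: algebra_simps)
  also have "\<dots> = l ^ DIM('a) * (\<integral>z. l powr (- real DIM('a)) * (\<rho> (a - z) * u (y + l *\<^sub>R z)) \<partial>lborel)"
    using l by (simp add: rescale_scaled mult_ac)
  also have "\<dots> = conv \<rho> (\<lambda>z. u (y + l *\<^sub>R z)) a"
    using l by (simp add: conv_def powr_minus powr_realpow)
  finally show ?thesis .
qed

lemma abs_conv_rescale_le:
  assumes "u \<in> borel_measurable borel" "\<And>x. \<bar>u x\<bar> \<le> M" "0 < l"
  shows "\<bar>conv u (rescale \<rho> l) x\<bar> \<le> M * (\<integral>a. \<bar>\<rho> a\<bar> \<partial>lborel)"
  using conv_rescale_scaled[OF assms(1,3), of x 0] abs_conv_le[of "\<lambda>z. u (x + l *\<^sub>R z)" M 0] assms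
  by simp

lemma conv_indicator_ball:
  assumes a: "norm a < 1/2"
  shows "conv \<rho> f a = conv \<rho> (\<lambda>z. indicator (ball 0 1) z * f z) a"
  unfolding conv_def
proof (rule Bochner_Integration.integral_cong[OF refl])
  fix z
  show "\<rho> (a - z) * f z = \<rho> (a - z) * (indicator (ball 0 1) z * f z)"
  proof (cases "\<rho> (a - z) = 0")
    case False
    then have "norm (a - z) < 1/2" by (rule norm_less_half)
    moreover have "norm z \<le> norm a + norm (a - z)"
      using norm_triangle_ineq4[of a "a - z"] by simp
    ultimately have "z \<in> ball 0 1" using a by simp
    then show ?thesis by simp
  qed simp
qed

lemma conv_self_eq_zero:
  assumes "1 \<le> norm z"
  shows "conv \<rho> \<rho> z = 0"
proof -
  have zero: "\<rho> (z - b) * \<rho> b = 0" for b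
  proof (rule ccontr)
    assume "\<rho> (z - b) * \<rho> b \<noteq> 0"
    then have "norm (z - b) < 1/2" "norm b < 1/2"
      using norm_less_half[of "z - b"] norm_less_half[of b] by auto
    then show False
      using assms norm_triangle_ineq[of "z - b" b] by simp
  qed
  then show ?thesis
    unfolding conv_def zero by simp
qed

lemma integral_conv_self_mult:
  assumes v: "set_integrable lborel (ball 0 1) v"
  shows "(\<integral>z. conv \<rho> \<rho> z * v z \<partial>lborel)
    = (\<integral>a. \<rho> a * conv \<rho> (\<lambda>z. indicator (ball 0 1) z * v z) a \<partial>lborel)"
proof -
  define vB where "vB = (\<lambda>z. indicator (ball 0 1) z * v z)"
  have vB: "integrable lborel vB"
    using v by (simp add: set_integrable_def vB_def)
  then have [measurable]: "vB \<in> borel_measurable borel" by auto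
  obtain R where R: "\<And>a. \<bar>\<rho> a\<bar> \<le> R" using kernel_bounded by blast
  have int: "integrable (lborel \<Otimes>\<^sub>M lborel) (\<lambda>(z, b). \<rho> (z - b) * \<rho> b * vB z)"
  proof (rule Bochner_Integration.integrable_bound)
    show "integrable (lborel \<Otimes>\<^sub>M lborel) (\<lambda>(z, b). vB z * (R * \<rho> b))"
      using vB integrable_kernel by (intro lborel_pair.integrable_mult_product) auto
    have "\<bar>\<rho> (z - b) * \<rho> b * vB z\<bar> \<le> \<bar>vB z * (R * \<rho> b)\<bar>" for z b
    proof -
      have "\<bar>\<rho> (z - b)\<bar> \<le> \<bar>R\<bar>"
        using R[of "z - b"] by linarith
      then have "\<bar>\<rho> (z - b)\<bar> * (\<bar>\<rho> b\<bar> * \<bar>vB z\<bar>) \<le> \<bar>R\<bar> * (\<bar>\<rho> b\<bar> * \<bar>vB z\<bar>)"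
        by (rule mult_right_mono) simp
      then show ?thesis by (simp add: abs_mult mult_ac)
    qed
    then show "AE p in lborel \<Otimes>\<^sub>M lborel. norm (case p of (z, b) \<Rightarrow> \<rho> (z - b) * \<rho> b * vB z)
        \<le> norm (case p of (z, b) \<Rightarrow> vB z * (R * \<rho> b))"
      by (intro AE_I2) (auto split: prod.split)
  qed measurable
  have "(\<integral>z. conv \<rho> \<rho> z * v z \<partial>lborel) = (\<integral>z. conv \<rho> \<rho> z * vB z \<partial>lborel)"
    by (intro Bochner_Integration.integral_cong) (auto simp: vB_def not_less conv_self_eq_zero split: split_indicator)
  also have "\<dots> = (\<integral>z. (\<integral>b. \<rho> (z - b) * \<rho> b * vB z \<partial>lborel) \<partial>lborel)"
    by (simp add: conv_def)
  also have "\<dots> = (\<integral>b. (\<integral>z. \<rho> (z - b) * \<rho> b * vB z \<partial>lborel) \<partial>lborel)"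
    using lborel_pair.Fubini_integral[OF int] by simp
  also have "\<dots> = (\<integral>b. \<rho> b * conv \<rho> vB b \<partial>lborel)"
  proof -
    have reflect: "\<rho> (z - b) * \<rho> b * vB z = \<rho> b * (\<rho> (b - z) * vB z)" for z b
      using even[of "b - z"] by (simp add: mult_ac)
    show ?thesis
      unfolding conv_def reflect by simp
  qed
  finally show ?thesis by (simp add: vB_def)
qed

lemma tendsto_conv_blowup:
  assumes [measurable]: "u \<in> borel_measurable borel" and u: "\<And>x. \<bar>u x\<bar> \<le> M"
    and blowup: "is_blowup u y v" and a: "norm a < 1/2"
  shows "((\<lambda>l. conv \<rho> (\<lambda>z. u (y + l *\<^sub>R z)) a)
    \<longlongrightarrow> conv \<rho> (\<lambda>z. indicator (ball 0 1) z * v z) a) (at_right 0)"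
proof -
  obtain R where R: "\<And>a. \<bar>\<rho> a\<bar> \<le> R" using kernel_bounded by blast
  define uB where "uB l z = indicator (ball 0 1) z * u (y + l *\<^sub>R z)" for l z
  define vB where "vB = (\<lambda>z. indicator (ball 0 1) z * v z)"
  have vB: "integrable lborel vB"
    using blowup by (simp add: is_blowup_def set_integrable_def vB_def)
  have uB: "integrable lborel (uB l)" for l
    unfolding uB_def using u
    by (intro integrable_mult_bounded[where B=M] integrable_real_indicator)
      (use emeasure_bounded_finite[OF bounded_ball] in auto)
  have "\<bar>uB l z - vB z\<bar> = indicator (ball 0 1) z * \<bar>u (y + l *\<^sub>R z) - v z\<bar>" for l z
    by (simp add: uB_def vB_def split: split_indicator)
  then have "((\<lambda>l. \<integral>z. \<bar>uB l z - vB z\<bar> \<partial>lborel) \<longlongrightarrow> 0) (at_right 0)"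
    using blowup by (simp add: is_blowup_def set_lebesgue_integral_def)
  then have lim: "((\<lambda>l. R * (\<integral>z. \<bar>uB l z - vB z\<bar> \<partial>lborel)) \<longlongrightarrow> 0) (at_right 0)"
    by (rule tendsto_mult_right_zero)
  have bound: "norm (conv \<rho> (uB l) a - conv \<rho> vB a) \<le> R * (\<integral>z. \<bar>uB l z - vB z\<bar> \<partial>lborel)" for l
    using abs_conv_diff_le[OF borel_measurable_kernel R uB vB] by simp
  have "((\<lambda>l. conv \<rho> (uB l) a - conv \<rho> vB a) \<longlongrightarrow> 0) (at_right 0)"
    using Lim_null_comparison[OF always_eventually[OF allI[OF bound]] lim] .
  moreover have "conv \<rho> (\<lambda>z. u (y + l *\<^sub>R z)) a = conv \<rho> (uB l) a" for l
    unfolding uB_def by (rule conv_indicator_ball[OF a])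
  ultimately show ?thesis
    by (simp add: LIM_zero_iff vB_def)
qed

lemma mollified_test_scaled:
  assumes [measurable]: "u \<in> borel_measurable borel" "\<phi> \<in> borel_measurable borel" and l: "0 < l"
  shows "mollified_test \<rho> \<phi> u l y
    = (\<integral>a. \<phi> (y + l *\<^sub>R a) * conv \<rho> (\<lambda>z. u (y + l *\<^sub>R z)) a * \<rho> a \<partial>lborel)"
proof -
  have integrand: "\<phi> (y + l *\<^sub>R a) * conv u (rescale \<rho> l) (y + l *\<^sub>R a) * rescale \<rho> l (y + l *\<^sub>R a - y)
      = l powr (- real DIM('a)) * (\<phi> (y + l *\<^sub>R a) * conv \<rho> (\<lambda>z. u (y + l *\<^sub>R z)) a * \<rho> a)" for a
    using l by (simp add: rescale_scaled conv_rescale_scaled[OF assms(1) l] mult.commute mult.left_commute)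
  have "mollified_test \<rho> \<phi> u l y
      = \<bar>l\<bar> ^ DIM('a) * (\<integral>a. \<phi> (y + l *\<^sub>R a) * conv u (rescale \<rho> l) (y + l *\<^sub>R a)
          * rescale \<rho> l (y + l *\<^sub>R a - y) \<partial>lborel)"
    unfolding mollified_test_def using l by (intro lborel_integral_affine) (simp, measurable)
  also have "\<dots> = (\<integral>a. \<phi> (y + l *\<^sub>R a) * conv \<rho> (\<lambda>z. u (y + l *\<^sub>R z)) a * \<rho> a \<partial>lborel)"
    unfolding integrand abs_of_pos[OF l] using l by (simp add: powr_minus powr_realpow)
  finally show ?thesis .
qed

lemma tendsto_mollified_test_integrand:
  assumes [measurable]: "u \<in> borel_measurable borel" and u: "\<And>x. \<bar>u x\<bar> \<le> M"
    and \<phi>: "isCont \<phi> y" and blowup: "is_blowup u y v"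
  shows "((\<lambda>l. \<phi> (y + l *\<^sub>R a) * conv \<rho> (\<lambda>z. u (y + l *\<^sub>R z)) a * \<rho> a)
    \<longlongrightarrow> \<phi> y * conv \<rho> (\<lambda>z. indicator (ball 0 1) z * v z) a * \<rho> a) (at_right 0)"
proof (cases "\<rho> a = 0")
  case False
  have "((\<lambda>l. y + l *\<^sub>R a) \<longlongrightarrow> y) (at_right 0)"
    by (auto intro!: tendsto_eq_intros)
  then have "((\<lambda>l. \<phi> (y + l *\<^sub>R a)) \<longlongrightarrow> \<phi> y) (at_right 0)"
    by (rule isCont_tendsto_compose[OF \<phi>])
  then show ?thesis
    using tendsto_conv_blowup[OF assms(1) u blowup norm_less_half[OF False]]
    by (intro tendsto_mult tendsto_const)
qed simp

lemma tendsto_mollified_test: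
  assumes [measurable]: "u \<in> borel_measurable borel" and u: "\<And>x. \<bar>u x\<bar> \<le> M"
    and \<phi>: "continuous_on UNIV \<phi>" "\<And>x. \<bar>\<phi> x\<bar> \<le> P" and blowup: "is_blowup u y v"
  shows "((\<lambda>l. mollified_test \<rho> \<phi> u l y) \<longlongrightarrow> \<phi> y * (\<integral>z. conv \<rho> \<rho> z * v z \<partial>lborel)) (at_right 0)"
proof -
  have [measurable]: "\<phi> \<in> borel_measurable borel"
    using \<phi>(1) by (rule borel_measurable_continuous_onI)
  define vB where "vB = (\<lambda>z. indicator (ball 0 1) z * v z)"
  have [measurable]: "vB \<in> borel_measurable borel"
    using blowup by (auto simp: is_blowup_def set_integrable_def vB_def)
  define N where "N = (\<integral>z. \<bar>\<rho> z\<bar> \<partial>lborel)"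
  have lim: "((\<lambda>l. \<integral>a. \<phi> (y + l *\<^sub>R a) * conv \<rho> (\<lambda>z. u (y + l *\<^sub>R z)) a * \<rho> a \<partial>lborel)
      \<longlongrightarrow> (\<integral>a. \<phi> y * conv \<rho> vB a * \<rho> a \<partial>lborel)) (at_right 0)"
  proof (rule integral_dominated_convergence_at_right[where w="\<lambda>a. P * (M * N) * \<bar>\<rho> a\<bar>"])
    show "integrable lborel (\<lambda>a. P * (M * N) * \<bar>\<rho> a\<bar>)"
      using integrable_kernel by simp
    show "AE a in lborel. ((\<lambda>l. \<phi> (y + l *\<^sub>R a) * conv \<rho> (\<lambda>z. u (y + l *\<^sub>R z)) a * \<rho> a)
        \<longlongrightarrow> \<phi> y * conv \<rho> vB a * \<rho> a) (at_right 0)"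
      using \<phi>(1) tendsto_mollified_test_integrand[OF _ u _ blowup]
      by (intro AE_I2) (simp add: vB_def continuous_on_eq_continuous_at)
    have "\<bar>\<phi> (y + l *\<^sub>R a) * conv \<rho> (\<lambda>z. u (y + l *\<^sub>R z)) a * \<rho> a\<bar> \<le> P * (M * N) * \<bar>\<rho> a\<bar>" for l a
      using abs_mult_le_mult[OF abs_mult_le_mult[OF \<phi>(2) abs_conv_le[OF _ u]] order_refl]
      by (simp add: N_def)
    then show "\<forall>\<^sub>F l in at_right 0. AE a in lborel.
        norm (\<phi> (y + l *\<^sub>R a) * conv \<rho> (\<lambda>z. u (y + l *\<^sub>R z)) a * \<rho> a) \<le> P * (M * N) * \<bar>\<rho> a\<bar>"
      by (intro always_eventually allI AE_I2) simp
  qed measurable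
  have "\<forall>\<^sub>F l in at_right 0.
      (\<integral>a. \<phi> (y + l *\<^sub>R a) * conv \<rho> (\<lambda>z. u (y + l *\<^sub>R z)) a * \<rho> a \<partial>lborel) = mollified_test \<rho> \<phi> u l y"
    using eventually_at_right_less[of 0] by eventually_elim (simp add: mollified_test_scaled)
  moreover have "(\<integral>a. \<phi> y * conv \<rho> vB a * \<rho> a \<partial>lborel) = \<phi> y * (\<integral>z. conv \<rho> \<rho> z * v z \<partial>lborel)"
    using integral_conv_self_mult blowup by (simp add: is_blowup_def vB_def mult_ac)
  ultimately show ?thesis
    using Lim_transform_eventually[OF lim] by simp
qed

lemma tendsto_mollified_test_blowup_avg:
  assumes "u \<in> borel_measurable borel" "\<And>x. \<bar>u x\<bar> \<le> M"
    and "continuous_on UNIV \<phi>" "\<And>x. \<bar>\<phi> x\<bar> \<le> P" and y: "y \<notin> no_blowup_set u"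
  shows "((\<lambda>l. mollified_test \<rho> \<phi> u l y) \<longlongrightarrow> \<phi> y * blowup_avg u (conv \<rho> \<rho>) y) (at_right 0)"
proof -
  have ex: "\<exists>v. is_blowup u y v"
    using y by (simp add: no_blowup_set_def)
  show ?thesis
    using tendsto_mollified_test[OF assms(1-4) someI_ex[OF ex]] ex by (simp add: blowup_avg_def)
qed

lemma borel_measurable_mollified_test [measurable]:
  assumes [measurable]: "u \<in> borel_measurable borel" "\<phi> \<in> borel_measurable borel"
  shows "mollified_test \<rho> \<phi> u l \<in> borel_measurable borel"
  unfolding mollified_test_def[abs_def] by measurable

lemma borel_measurable_blowup_avg:
  assumes [measurable]: "u \<in> borel_measurable borel" "no_blowup_set u \<in> sets borel"
    and u: "\<And>x. \<bar>u x\<bar> \<le> M" and \<phi>: "continuous_on UNIV \<phi>" "\<And>x. \<bar>\<phi> x\<bar> \<le> P"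
  shows "(\<lambda>y. \<phi> y * blowup_avg u (conv \<rho> \<rho>) y) \<in> borel_measurable borel"
proof (rule borel_measurable_at_right_limit)
  have [measurable]: "\<phi> \<in> borel_measurable borel"
    using \<phi>(1) by (rule borel_measurable_continuous_onI)
  show "(\<lambda>y. if y \<in> no_blowup_set u then 0 else mollified_test \<rho> \<phi> u l y) \<in> borel_measurable borel" for l
    by measurable
  show "((\<lambda>l. if y \<in> no_blowup_set u then 0 else mollified_test \<rho> \<phi> u l y)
      \<longlongrightarrow> \<phi> y * blowup_avg u (conv \<rho> \<rho>) y) (at_right 0)" for y
  proof (cases "y \<in> no_blowup_set u")
    case True
    then show ?thesis by (simp add: no_blowup_set_def blowup_avg_def)
  next
    case False
    then show ?thesis
      using tendsto_mollified_test_blowup_avg[OF assms(1) u \<phi> False] by simp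
  qed
qed

lemma norm_le_if_rescale_nonzero:
  assumes "0 < l" "rescale \<rho> l (x - y) \<noteq> 0"
  shows "norm y \<le> norm x + l"
proof -
  have "norm (x - y) < l/2"
    using assms rescale_eq_zero[of l "x - y"] by linarith
  then show ?thesis
    using assms(1) norm_triangle_ineq4[of x "x - y"] by simp
qed

lemma abs_mollified_test_le:
  assumes [measurable]: "u \<in> borel_measurable borel" "\<phi> \<in> borel_measurable borel"
    and u: "\<And>x. \<bar>u x\<bar> \<le> M" and \<phi>: "\<And>x. \<bar>\<phi> x\<bar> \<le> P" "\<And>x. r < norm x \<Longrightarrow> \<phi> x = 0"
    and l: "0 < l" "l \<le> 1"
  shows "\<bar>mollified_test \<rho> \<phi> u l y\<bar>
    \<le> P * M * (\<integral>a. \<bar>\<rho> a\<bar> \<partial>lborel)\<^sup>2 * indicator (cball 0 (r + 1)) y"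
proof (cases "y \<in> cball 0 (r + 1)")
  case False
  have zero: "\<phi> x * conv u (rescale \<rho> l) x * rescale \<rho> l (x - y) = 0" for x
    using norm_le_if_rescale_nonzero[OF l(1), of x y] \<phi>(2)[of x] False l(2) by force
  show ?thesis
    using False unfolding mollified_test_def zero by simp
next
  case True
  define N where "N = (\<integral>a. \<bar>\<rho> a\<bar> \<partial>lborel)"
  have "\<bar>mollified_test \<rho> \<phi> u l y\<bar> \<le> (\<integral>x. P * (M * N) * \<bar>rescale \<rho> l (x - y)\<bar> \<partial>lborel)"
    unfolding mollified_test_def
  proof (rule abs_integral_le_integral)
    show "integrable lborel (\<lambda>x. P * (M * N) * \<bar>rescale \<rho> l (x - y)\<bar>)"
      using integrable_rescale_shift[OF l(1)] by simp
    show "\<bar>\<phi> x * conv u (rescale \<rho> l) x * rescale \<rho> l (x - y)\<bar> \<le> P * (M * N) * \<bar>rescale \<rho> l (x - y)\<bar>" for x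
      using abs_mult_le_mult[OF abs_mult_le_mult[OF \<phi>(1) abs_conv_rescale_le[OF _ u l(1)]] order_refl]
      by (simp add: N_def)
  qed
  also have "\<dots> = P * M * N\<^sup>2"
    using integral_abs_rescale_shift[OF l(1)] by (simp add: N_def power2_eq_square)
  finally show ?thesis
    using True by (simp add: N_def)
qed

lemma integrable_mollified_pairing:
  assumes [measurable]: "u \<in> borel_measurable borel" "\<phi> \<in> borel_measurable borel" "\<sigma> \<in> borel_measurable borel"
    and u: "\<And>x. \<bar>u x\<bar> \<le> M" and \<phi>: "\<And>x. \<bar>\<phi> x\<bar> \<le> P" "\<And>x. r < norm x \<Longrightarrow> \<phi> x = 0"
    and \<sigma>: "\<And>x. \<bar>\<sigma> x\<bar> \<le> 1" and radon: "radon_measure \<mu>" and l: "0 < l"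
  shows "integrable (lborel \<Otimes>\<^sub>M \<mu>)
    (\<lambda>(x, y). \<phi> x * conv u (rescale \<rho> l) x * (rescale \<rho> l (x - y) * \<sigma> y))"
    (is "integrable _ (\<lambda>(x, y). ?H x y)")
proof -
  interpret \<mu>: sigma_finite_measure \<mu>
    using radon by (rule radon_measure_sigma_finite)
  have sets: "sets \<mu> = sets borel"
    using radon by (simp add: radon_measure_def)
  obtain R where R: "\<And>x. \<bar>rescale \<rho> l x\<bar> \<le> R" using rescale_bounded by blast
  define N where "N = (\<integral>a. \<bar>\<rho> a\<bar> \<partial>lborel)"
  define A where "A = cball (0::'a) r \<times> cball (0::'a) (r + l)"
  show ?thesis
  proof (rule integrableI_bounded_set[where A=A and B="P * (M * N) * (R * 1)"])
    show "A \<in> sets (lborel \<Otimes>\<^sub>M \<mu>)"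
      unfolding A_def by (rule pair_measureI) (auto simp: sets)
    have "emeasure lborel (cball 0 r) < \<infinity>" "emeasure \<mu> (cball 0 (r + l)) < \<infinity>"
      using radon emeasure_bounded_finite[OF bounded_cball] by (auto simp: radon_measure_def)
    then show "emeasure (lborel \<Otimes>\<^sub>M \<mu>) A < \<infinity>"
      unfolding A_def by (subst \<mu>.emeasure_pair_measure_Times) (auto simp: sets ennreal_mult_less_top)
    have "(\<lambda>(x, y). ?H x y) \<in> borel_measurable (borel \<Otimes>\<^sub>M borel)"
      by measurable
    then show "(\<lambda>(x, y). ?H x y) \<in> borel_measurable (lborel \<Otimes>\<^sub>M \<mu>)"
      by (simp add: measurable_cong_sets[OF sets_pair_measure_cong[OF sets_lborel sets] refl])
    have "\<bar>?H x y\<bar> \<le> P * (M * N) * (R * 1)" for x y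
      using abs_mult_le_mult[OF abs_mult_le_mult[OF \<phi>(1) abs_conv_rescale_le[OF _ u l]]
          abs_mult_le_mult[OF R \<sigma>]]
      by (simp add: N_def)
    then show "AE p in lborel \<Otimes>\<^sub>M \<mu>. p \<in> A \<longrightarrow> norm (case p of (x, y) \<Rightarrow> ?H x y) \<le> P * (M * N) * (R * 1)"
      by (intro AE_I2) auto
    have "(case p of (x, y) \<Rightarrow> ?H x y) = 0" if "p \<notin> A" for p
      using that \<phi>(2)[of "fst p"] norm_le_if_rescale_nonzero[OF l, of "fst p" "snd p"]
      unfolding A_def by (cases p) force
    then show "AE p in lborel \<Otimes>\<^sub>M \<mu>. p \<notin> A \<longrightarrow> (case p of (x, y) \<Rightarrow> ?H x y) = 0"
      by (intro AE_I2 impI)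
  qed
qed

lemma integral_mollified_product_eq:
  assumes [measurable]: "u \<in> borel_measurable borel" "\<phi> \<in> borel_measurable borel" "\<sigma> \<in> borel_measurable borel"
    and u: "\<And>x. \<bar>u x\<bar> \<le> M" and \<phi>: "\<And>x. \<bar>\<phi> x\<bar> \<le> P" "\<And>x. r < norm x \<Longrightarrow> \<phi> x = 0"
    and \<sigma>: "\<And>x. \<bar>\<sigma> x\<bar> \<le> 1" and radon: "radon_measure \<mu>" and l: "0 < l"
  shows "(\<integral>x. \<phi> x * conv u (rescale \<rho> l) x * conv_meas \<mu> \<sigma> (rescale \<rho> l) x \<partial>lborel)
    = (\<integral>y. mollified_test \<rho> \<phi> u l y * \<sigma> y \<partial>\<mu>)"
proof -
  interpret \<mu>: sigma_finite_measure \<mu>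
    using radon by (rule radon_measure_sigma_finite)
  interpret pair_sigma_finite lborel \<mu> ..
  define H where "H x y = \<phi> x * conv u (rescale \<rho> l) x * (rescale \<rho> l (x - y) * \<sigma> y)" for x y
  have "(\<integral>x. (\<integral>y. H x y \<partial>\<mu>) \<partial>lborel) = (\<integral>y. (\<integral>x. H x y \<partial>lborel) \<partial>\<mu>)"
    using integrable_mollified_pairing[OF assms] unfolding H_def by (rule Fubini_integral[symmetric])
  moreover have "(\<integral>y. H x y \<partial>\<mu>) = \<phi> x * conv u (rescale \<rho> l) x * conv_meas \<mu> \<sigma> (rescale \<rho> l) x" for x
    by (simp add: H_def conv_meas_def)
  moreover have "H x y = (\<phi> x * conv u (rescale \<rho> l) x * rescale \<rho> l (x - y)) * \<sigma> y" for x y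
    by (simp add: H_def mult_ac)
  ultimately show ?thesis
    by (simp add: mollified_test_def)
qed

lemma tendsto_integral_mollified_test:
  assumes [measurable]: "u \<in> borel_measurable borel" "\<sigma> \<in> borel_measurable borel"
    and u: "\<And>x. \<bar>u x\<bar> \<le> M" and \<sigma>: "\<And>x. \<bar>\<sigma> x\<bar> \<le> 1" and radon: "radon_measure \<mu>"
    and negl: "no_blowup_set u \<in> null_sets \<mu>"
    and \<phi>: "continuous_on UNIV \<phi>" "\<And>x. \<bar>\<phi> x\<bar> \<le> P" "\<And>x. r < norm x \<Longrightarrow> \<phi> x = 0"
  shows "((\<lambda>l. \<integral>y. mollified_test \<rho> \<phi> u l y * \<sigma> y \<partial>\<mu>)
    \<longlongrightarrow> (\<integral>y. \<phi> y * blowup_avg u (conv \<rho> \<rho>) y * \<sigma> y \<partial>\<mu>)) (at_right 0)"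
proof -
  have sets: "sets \<mu> = sets borel"
    using radon by (simp add: radon_measure_def)
  have [measurable]: "\<phi> \<in> borel_measurable borel"
    using \<phi>(1) by (rule borel_measurable_continuous_onI)
  have [measurable]: "(\<lambda>y. \<phi> y * blowup_avg u (conv \<rho> \<rho>) y) \<in> borel_measurable borel"
    using negl sets by (intro borel_measurable_blowup_avg[OF _ _ u \<phi>(1,2)]) auto
  define C where "C = P * M * (\<integral>a. \<bar>\<rho> a\<bar> \<partial>lborel)\<^sup>2"
  show ?thesis
  proof (rule integral_dominated_convergence_at_right[where w="\<lambda>y. C * indicator (cball 0 (r + 1)) y"])
    show "integrable \<mu> (\<lambda>y. C * indicator (cball 0 (r + 1)) y)"
      using radon by (intro integrable_mult_right integrable_real_indicator) (auto simp: sets radon_measure_def)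
    show "AE y in \<mu>. ((\<lambda>l. mollified_test \<rho> \<phi> u l y * \<sigma> y)
        \<longlongrightarrow> \<phi> y * blowup_avg u (conv \<rho> \<rho>) y * \<sigma> y) (at_right 0)"
      using AE_not_in[OF negl]
      by eventually_elim (intro tendsto_mult_right tendsto_mollified_test_blowup_avg[OF _ u \<phi>(1,2)], simp)
    have "\<forall>\<^sub>F l in at_right 0. 0 < l \<and> l \<le> (1::real)"
      by (auto simp: eventually_at_right_field intro: exI[of _ 1])
    then show "\<forall>\<^sub>F l in at_right 0. AE y in \<mu>.
        norm (mollified_test \<rho> \<phi> u l y * \<sigma> y) \<le> C * indicator (cball 0 (r + 1)) y"
    proof eventually_elim
      case (elim l)
      show ?case
        using abs_mult_le_mult[OF abs_mollified_test_le[OF _ _ u \<phi>(2,3)] \<sigma>] elim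
        by (intro AE_I2) (simp add: C_def)
    qed
  qed (simp_all add: sets measurable_cong_sets[OF sets refl])
qed

end

theorem lemma3p4:
  fixes u :: "'a::euclidean_space \<Rightarrow> real"
    and \<mu> :: "'a measure" and \<sigma> :: "'a \<Rightarrow> real"
    and \<rho> :: "'a \<Rightarrow> real"
  assumes u_borel: "u \<in> borel_measurable borel"
    and u_bdd: "bounded (range u)"
    and radon: "radon_measure \<mu>"
    and \<sigma>_meas: "\<sigma> \<in> borel_measurable borel"
    and \<sigma>_unit: "\<forall>x. \<bar>\<sigma> x\<bar> = 1"
    and negl: "no_blowup_set u \<in> null_sets \<mu>"
    and \<rho>K: "\<rho> \<in> mollifiers"
    and \<rho>supp: "supp \<rho> \<subseteq> ball 0 (1/2)"
  shows "\<forall>\<phi>::'a \<Rightarrow> real. continuous_on UNIV \<phi> \<and> compact (supp \<phi>) \<longrightarrow>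
     ((\<lambda>l. \<integral>x. \<phi> x * conv u (rescale \<rho> l) x * conv_meas \<mu> \<sigma> (rescale \<rho> l) x \<partial>lborel)
        \<longlongrightarrow> (\<integral>x. \<phi> x * blowup_avg u (conv \<rho> \<rho>) x * \<sigma> x \<partial>\<mu>)) (at_right 0)"
proof (intro allI impI, elim conjE)
  fix \<phi> :: "'a \<Rightarrow> real"
  assume \<phi>_cont: "continuous_on UNIV \<phi>" and \<phi>_supp: "compact (supp \<phi>)"
  interpret half_ball_kernel \<rho>
    using \<rho>K \<rho>supp by (rule mollifier_half_ball_kernel)
  obtain M where M: "\<And>x. \<bar>u x\<bar> \<le> M"
    using u_bdd by (auto simp: bounded_iff)
  obtain P r where P: "\<And>x. \<bar>\<phi> x\<bar> \<le> P" and r: "\<And>x. r < norm x \<Longrightarrow> \<phi> x = 0"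
    using continuous_compact_supp_bounds[OF \<phi>_cont \<phi>_supp] by blast
  have \<sigma>: "\<And>x. \<bar>\<sigma> x\<bar> \<le> 1"
    using \<sigma>_unit by simp
  have \<phi>_borel: "\<phi> \<in> borel_measurable borel"
    using \<phi>_cont by (rule borel_measurable_continuous_onI)
  have "\<forall>\<^sub>F l in at_right 0. (\<integral>y. mollified_test \<rho> \<phi> u l y * \<sigma> y \<partial>\<mu>)
      = (\<integral>x. \<phi> x * conv u (rescale \<rho> l) x * conv_meas \<mu> \<sigma> (rescale \<rho> l) x \<partial>lborel)"
    using eventually_at_right_less[of 0]
    by eventually_elim (simp add: integral_mollified_product_eq[OF u_borel \<phi>_borel \<sigma>_meas M P r \<sigma> radon])
  with tendsto_integral_mollified_test[OF u_borel \<sigma>_meas M \<sigma> radon negl \<phi>_cont P r]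
  show "((\<lambda>l. \<integral>x. \<phi> x * conv u (rescale \<rho> l) x * conv_meas \<mu> \<sigma> (rescale \<rho> l) x \<partial>lborel)
      \<longlongrightarrow> (\<integral>x. \<phi> x * blowup_avg u (conv \<rho> \<rho>) x * \<sigma> x \<partial>\<mu>)) (at_right 0)"
    by (rule Lim_transform_eventually)
qed

end
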